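(* Let $p,q\ge 3$ be relatively prime odd integers with $q\equiv\pm1\pmod p$. Then $$\sum_{\substack{n=1\\ p\nmid n,\ q\nmid n}}^{pq-1}\frac{\cot(\pi n/p)\cot(\pi n/q)}{\cos^2(\pi n/(pq))}=\begin{cases}\dfrac{2}{p}(p^2-1)(q-1), & q\equiv 1\pmod p,\\[2mm] \dfrac{2}{p}(p^2-1)(q+1), & q\equiv -1\pmod p.\end{cases}$$ *)

theory Defs
  imports "HOL-Analysis.Analysis" "HOL-Number_Theory.Cong"
begin

end

theory Submission
  imports Defs
begin

text \<open>Write \<open>q = k p + e\<close> with \<open>e = \<plusminus>1\<close> and group the summands by the residue of \<open>n\<close> mod \<open>q\<close>.
  Since \<open>k\<pi>n/q + e \<pi>n/(pq) = \<pi>n/p\<close>, the addition formula for the cotangent splits each summand into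
  multiples of \<open>tan (\<pi>n/(pq))\<close>, \<open>cot (\<pi>n/p)\<close> and \<open>1/cos\<^sup>2 (\<pi>n/(pq))\<close>, and over a residue class
  these are summed by the classical identities
  \<open>\<Sum>\<^sub>i cot (\<theta> + i\<pi>/p) = p cot (p\<theta>)\<close>, \<open>\<Sum>\<^sub>i tan (\<theta> + i\<pi>/p) = p tan (p\<theta>)\<close> and
  \<open>\<Sum>\<^sub>i 1/cos\<^sup>2 (\<theta> + i\<pi>/p) = p\<^sup>2/cos\<^sup>2 (p\<theta>)\<close> (the last two for odd \<open>p\<close>), which come from summing
  geometric series over the \<open>p\<close>-th roots of unity. Reindexing the residues as \<open>p m\<close> mod \<open>q\<close> leaves
  sums over \<open>m\<close> of powers of \<open>tan (\<pi>m/q)\<close> times \<open>cot\<close> or \<open>tan\<close> of \<open>p\<pi>m/q\<close>. Expanding the latter by the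
  same identities and exchanging the order of summation reduces everything to the power sums
  \<open>\<Sum>\<^sub>m tan\<^sup>j (\<pi>m/q)\<close>, \<open>j \<le> 3\<close>, and to sums \<open>\<Sum>\<^sub>m cot (\<pi>m/q + \<pi>j/p)\<close>, which the identities evaluate
  once more since \<open>q \<pi>j/p \<equiv> e \<pi>j/p\<close> mod \<open>\<pi>\<close>.\<close>

section \<open>Rotations by a primitive root of unity\<close>

locale primitive_root_of_unity =
  fixes \<zeta> :: complex and M :: nat
  assumes power_order: "\<zeta> ^ M = 1"
    and power_ne_1: "\<And>j. 0 < j \<Longrightarrow> j < M \<Longrightarrow> \<zeta> ^ j \<noteq> 1"
begin

lemma sum_powers_power:
  assumes "j < M"
  shows "(\<Sum>i<M. (\<zeta> ^ j) ^ i) = (if j = 0 then of_nat M else 0)"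
proof (cases "j = 0")
  case False
  have "(1 - \<zeta> ^ j) * (\<Sum>i<M. (\<zeta> ^ j) ^ i) = 1 - (\<zeta> ^ j) ^ M"
    by (simp add: one_diff_power_eq)
  also have "(\<zeta> ^ j) ^ M = 1"
    by (metis power_order power_mult power_one mult.commute)
  moreover have "1 - \<zeta> ^ j \<noteq> 0"
    using power_ne_1[of j] False assms by auto
  ultimately show ?thesis
    using False by simp
qed simp

lemma sum_polynomial_rotations:
  "(\<Sum>i<M. \<Sum>j<M. g j * (c * \<zeta> ^ i) ^ j) = of_nat M * g 0"
proof -
  have "(\<Sum>i<M. \<Sum>j<M. g j * (c * \<zeta> ^ i) ^ j) = (\<Sum>j<M. g j * c ^ j * (\<Sum>i<M. (\<zeta> ^ j) ^ i))"
    by (subst sum.swap)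
       (simp add: sum_distrib_left power_mult_distrib mult.assoc flip: power_mult,
        simp add: mult.commute power_mult)
  also have "\<dots> = (\<Sum>j<M. if j = 0 then g 0 * of_nat M else 0)"
    by (rule sum.cong) (auto simp: sum_powers_power)
  finally show ?thesis
    by (cases M) (auto simp: sum.delta)
qed

lemma power_order_rotation: "(c * \<zeta> ^ i) ^ M = c ^ M"
  by (simp add: power_mult_distrib flip: power_mult) (simp add: mult.commute power_mult power_order)

lemma one_minus_rotation_ne_0:
  assumes "c ^ M \<noteq> 1"
  shows "1 - c * \<zeta> ^ i \<noteq> 0"
  using assms power_order_rotation[of c i] by auto

text \<open>Both sums are evaluated by expanding each summand as a polynomial of degree \<open>< M\<close>
  in \<open>v = c \<zeta>\<^sup>i\<close>, using \<open>v\<^sup>M = c\<^sup>M\<close>; summing over \<open>i\<close> then keeps only the constant term.\<close>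

lemma sum_inverse_one_minus_rotation:
  assumes "c ^ M \<noteq> 1"
  shows "(\<Sum>i<M. 1 / (1 - c * \<zeta> ^ i)) = of_nat M / (1 - c ^ M)"
proof -
  have "1 / (1 - c * \<zeta> ^ i) = (\<Sum>j<M. 1 / (1 - c ^ M) * (c * \<zeta> ^ i) ^ j)" for i
  proof -
    define v where "v = c * \<zeta> ^ i"
    have "1 - c ^ M = (1 - v) * (\<Sum>j<M. v ^ j)"
      using one_diff_power_eq[of v M] power_order_rotation[of c i] by (simp add: v_def)
    moreover have "1 - v \<noteq> 0" "1 - c ^ M \<noteq> 0"
      using assms one_minus_rotation_ne_0 by (auto simp: v_def)
    ultimately have "1 / (1 - v) = (\<Sum>j<M. v ^ j) / (1 - c ^ M)"
      by simp
    then show ?thesis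
      by (simp add: sum_divide_distrib v_def)
  qed
  then have "(\<Sum>i<M. 1 / (1 - c * \<zeta> ^ i))
      = (\<Sum>i<M. \<Sum>j<M. 1 / (1 - c ^ M) * (c * \<zeta> ^ i) ^ j)"
    by simp
  also have "\<dots> = of_nat M * (1 / (1 - c ^ M))"
    by (rule sum_polynomial_rotations)
  finally show ?thesis
    by simp
qed

lemma sum_weighted_powers:
  fixes v :: complex
  shows "(1 - v)^2 * (\<Sum>j<n. of_nat j * v ^ j) = v - of_nat n * v ^ n + (of_nat n - 1) * v ^ Suc n"
  by (induction n) (simp_all add: algebra_simps power2_eq_square)

lemma sum_rotation_over_square:
  assumes "c ^ M \<noteq> 1"
  shows "(\<Sum>i<M. c * \<zeta> ^ i / (1 - c * \<zeta> ^ i)^2) = of_nat M ^ 2 * c ^ M / (1 - c ^ M)^2"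
proof -
  define K where "K = of_nat M * c ^ M / (1 - c ^ M)"
  have ne: "1 - c ^ M \<noteq> 0"
    using assms by simp
  have "c * \<zeta> ^ i / (1 - c * \<zeta> ^ i)^2 = (\<Sum>j<M. (of_nat j + K) / (1 - c ^ M) * (c * \<zeta> ^ i) ^ j)"
    for i
  proof -
    define v where "v = c * \<zeta> ^ i"
    have vM: "v ^ M = c ^ M"
      unfolding v_def by (rule power_order_rotation)
    have geom: "1 - c ^ M = (1 - v) * (\<Sum>j<M. v ^ j)"
      using one_diff_power_eq[of v M] vM by simp
    have "(1 - v)^2 * (\<Sum>j<M. (of_nat j + K) * v ^ j)
        = (1 - v)^2 * (\<Sum>j<M. of_nat j * v ^ j) + K * (1 - v) * ((1 - v) * (\<Sum>j<M. v ^ j))"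
      by (simp add: sum.distrib distrib_right flip: sum_distrib_left)
         (simp add: algebra_simps power2_eq_square)
    also have "\<dots> = v * (1 - c ^ M)"
      unfolding sum_weighted_powers geom[symmetric] using ne
      by (simp add: K_def vM field_simps)
    finally have "(1 - v)^2 * (\<Sum>j<M. (of_nat j + K) * v ^ j) = v * (1 - c ^ M)" .
    moreover have "1 - v \<noteq> 0"
      using one_minus_rotation_ne_0[OF assms] by (simp add: v_def)
    ultimately have "v / (1 - v)^2 = (\<Sum>j<M. (of_nat j + K) * v ^ j) / (1 - c ^ M)"
      using ne by (simp add: field_simps)
    then show ?thesis
      by (simp add: sum_divide_distrib mult.commute v_def)
  qed
  then have "(\<Sum>i<M. c * \<zeta> ^ i / (1 - c * \<zeta> ^ i)^2)
      = (\<Sum>i<M. \<Sum>j<M. (of_nat j + K) / (1 - c ^ M) * (c * \<zeta> ^ i) ^ j)"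
    by simp
  also have "\<dots> = of_nat M * ((of_nat 0 + K) / (1 - c ^ M))"
    by (rule sum_polynomial_rotations)
  finally show ?thesis
    using ne by (simp add: K_def power2_eq_square)
qed

end

lemma primitive_root_of_unity_cis:
  assumes "0 < M"
  shows "primitive_root_of_unity (cis (2 * pi / M)) M"
proof
  show "cis (2 * pi / M) ^ M = 1"
    unfolding Complex.DeMoivre using assms by simp
  fix j assume j: "0 < j" "j < M"
  have "cis (2 * pi * real j / real M) \<noteq> cis (2 * pi * real 0 / real M)"
    using inj_onD[OF bij_betw_imp_inj_on[OF Complex.bij_betw_roots_unity[OF assms]], of j 0] j
    by auto
  then show "cis (2 * pi / M) ^ j \<noteq> 1"
    by (simp add: Complex.DeMoivre mult.commute)
qed

section \<open>Sums over equally spaced angles\<close>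

lemma one_minus_cis_double: "1 - cis (2 * t) = - 2 * \<i> * complex_of_real (sin t) * cis t"
  using cos_double_sin[of t] sin_double[of t]
  by (simp add: complex_eq_iff power2_eq_square algebra_simps)

lemma one_plus_cis_double: "1 + cis (2 * t) = 2 * complex_of_real (cos t) * cis t"
  using cos_double_cos[of t] sin_double[of t]
  by (simp add: complex_eq_iff power2_eq_square algebra_simps)

lemma cot_eq_cis_double:
  assumes "cis (2 * t) \<noteq> 1"
  shows "complex_of_real (cot t) = - \<i> * (2 / (1 - cis (2 * t)) - 1)"
proof -
  have "sin t \<noteq> 0"
    using assms one_minus_cis_double[of t] by auto
  have "2 / (1 - cis (2 * t)) - 1 = (1 + cis (2 * t)) / (1 - cis (2 * t))"
    using assms by (simp add: field_simps)
  also have "\<dots> = \<i> * complex_of_real (cos t / sin t)"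
    unfolding one_minus_cis_double one_plus_cis_double
    using \<open>sin t \<noteq> 0\<close> by (simp add: field_simps cis_neq_zero)
  finally show ?thesis
    by (simp add: cot_def)
qed

lemma tan_eq_cis_double:
  assumes "cis (2 * t) \<noteq> - 1"
  shows "complex_of_real (tan t) = \<i> * (2 / (1 + cis (2 * t)) - 1)"
proof -
  have "cos t \<noteq> 0"
    using assms one_plus_cis_double[of t] by (auto simp: add_eq_0_iff)
  have "2 / (1 + cis (2 * t)) - 1 = (1 - cis (2 * t)) / (1 + cis (2 * t))"
    using assms by (simp add: field_simps add_eq_0_iff)
  also have "\<dots> = - \<i> * complex_of_real (sin t / cos t)"
    unfolding one_minus_cis_double one_plus_cis_double
    using \<open>cos t \<noteq> 0\<close> by (simp add: field_simps cis_neq_zero)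
  finally show ?thesis
    by (simp add: tan_def)
qed

lemma inverse_cos_squared_eq_cis_double:
  assumes "cis (2 * t) \<noteq> - 1"
  shows "complex_of_real (1 / (cos t)^2) = 4 * cis (2 * t) / (1 + cis (2 * t))^2"
proof -
  have "cos t \<noteq> 0"
    using assms one_plus_cis_double[of t] by (auto simp: add_eq_0_iff)
  moreover have "cis (2 * t) = cis t ^ 2"
    by (simp add: Complex.DeMoivre)
  ultimately show ?thesis
    unfolding one_plus_cis_double by (simp add: field_simps power2_eq_square cis_neq_zero)
qed

lemma cis_double_shift: "cis (2 * (\<theta> + pi * real i / real M)) = cis (2 * \<theta>) * cis (2 * pi / M) ^ i"
  by (simp add: Complex.DeMoivre cis_mult algebra_simps)

lemma cis_double_power: "cis (2 * \<theta>) ^ M = cis (2 * (real M * \<theta>))"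
  by (simp add: Complex.DeMoivre algebra_simps)

text \<open>Via \<open>cot t = -\<i> (2 / (1 - cis 2t) - 1)\<close>, the angles \<open>\<theta> + i\<pi>/M\<close> correspond to the rotations
  \<open>c \<zeta>\<^sup>i\<close> of \<open>c = cis 2\<theta>\<close> by the \<open>M\<close>-th roots of unity. For \<open>tan\<close> and \<open>1/cos\<^sup>2\<close> one rotates
  \<open>c = - cis 2\<theta>\<close> instead, and then \<open>c\<^sup>M = - cis 2M\<theta>\<close> only for odd \<open>M\<close>.\<close>

lemma sum_cot_shifts:
  fixes M :: nat
  assumes "0 < M" and "sin (real M * \<theta>) \<noteq> 0"
  shows "(\<Sum>i<M. cot (\<theta> + pi * real i / real M)) = real M * cot (real M * \<theta>)"
proof -
  interpret primitive_root_of_unity "cis (2 * pi / real M)" M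
    by (rule primitive_root_of_unity_cis[OF assms(1)])
  define c where "c = cis (2 * \<theta>)"
  have cM: "c ^ M \<noteq> 1"
    using assms(2) one_minus_cis_double[of "real M * \<theta>"]
    by (auto simp: c_def cis_double_power cis_neq_zero)
  have "complex_of_real (cot (\<theta> + pi * real i / real M))
      = - \<i> * (2 * (1 / (1 - c * cis (2 * pi / real M) ^ i)) - 1)" for i
    using cot_eq_cis_double[of "\<theta> + pi * real i / real M"] one_minus_rotation_ne_0[OF cM, of i]
    unfolding cis_double_shift c_def by simp
  then have "complex_of_real (\<Sum>i<M. cot (\<theta> + pi * real i / real M))
      = (\<Sum>i<M. - \<i> * (2 * (1 / (1 - c * cis (2 * pi / real M) ^ i)) - 1))"
    by simp
  also have "\<dots> = - \<i> * (2 * (\<Sum>i<M. 1 / (1 - c * cis (2 * pi / real M) ^ i)) - M)"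
    by (simp only: sum_subtractf flip: sum_distrib_left) simp
  also have "\<dots> = M * (- \<i> * (2 / (1 - c ^ M) - 1))"
    unfolding sum_inverse_one_minus_rotation[OF cM] by (simp add: algebra_simps)
  also have "\<dots> = complex_of_real (real M * cot (real M * \<theta>))"
    using cot_eq_cis_double[of "real M * \<theta>"] cM by (simp add: c_def cis_double_power)
  finally show ?thesis
    by (simp only: of_real_eq_iff)
qed

lemma neg_cis_double_power_odd:
  fixes M :: nat
  assumes "odd M" and "cos (real M * \<theta>) \<noteq> 0"
  shows "(- cis (2 * \<theta>)) ^ M = - cis (2 * (real M * \<theta>))" and "(- cis (2 * \<theta>)) ^ M \<noteq> 1"
proof -
  show cM: "(- cis (2 * \<theta>)) ^ M = - cis (2 * (real M * \<theta>))"
    using assms(1) by (simp add: power_minus_odd cis_double_power)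
  have "1 + cis (2 * (real M * \<theta>)) \<noteq> 0"
    using assms(2) by (simp add: one_plus_cis_double cis_neq_zero)
  then show "(- cis (2 * \<theta>)) ^ M \<noteq> 1"
    unfolding cM by (auto simp: add_eq_0_iff minus_equation_iff)
qed

lemma sum_tan_shifts_odd:
  fixes M :: nat
  assumes "odd M" and "cos (real M * \<theta>) \<noteq> 0"
  shows "(\<Sum>i<M. tan (\<theta> + pi * real i / real M)) = real M * tan (real M * \<theta>)"
proof -
  interpret primitive_root_of_unity "cis (2 * pi / real M)" M
    using assms(1) by (intro primitive_root_of_unity_cis) (auto intro: odd_pos)
  define c where "c = - cis (2 * \<theta>)"
  note cM = neg_cis_double_power_odd[OF assms, folded c_def]
  have "complex_of_real (tan (\<theta> + pi * real i / real M))
      = \<i> * (2 * (1 / (1 - c * cis (2 * pi / real M) ^ i)) - 1)" for i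
    using tan_eq_cis_double[of "\<theta> + pi * real i / real M"] one_minus_rotation_ne_0[OF cM(2), of i]
    unfolding cis_double_shift c_def by (simp add: add_eq_0_iff)
  then have "complex_of_real (\<Sum>i<M. tan (\<theta> + pi * real i / real M))
      = (\<Sum>i<M. \<i> * (2 * (1 / (1 - c * cis (2 * pi / real M) ^ i)) - 1))"
    by simp
  also have "\<dots> = \<i> * (2 * (\<Sum>i<M. 1 / (1 - c * cis (2 * pi / real M) ^ i)) - M)"
    by (simp only: sum_subtractf flip: sum_distrib_left) simp
  also have "\<dots> = M * (\<i> * (2 / (1 - c ^ M) - 1))"
    unfolding sum_inverse_one_minus_rotation[OF cM(2)] by (simp add: algebra_simps)
  also have "\<dots> = complex_of_real (real M * tan (real M * \<theta>))"
    using tan_eq_cis_double[of "real M * \<theta>"] cM by (simp add: c_def minus_equation_iff)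
  finally show ?thesis
    by (simp only: of_real_eq_iff)
qed

lemma sum_inverse_cos_squared_shifts_odd:
  fixes M :: nat
  assumes "odd M" and "cos (real M * \<theta>) \<noteq> 0"
  shows "(\<Sum>i<M. 1 / (cos (\<theta> + pi * real i / real M))^2) = (real M)^2 / (cos (real M * \<theta>))^2"
proof -
  interpret primitive_root_of_unity "cis (2 * pi / real M)" M
    using assms(1) by (intro primitive_root_of_unity_cis) (auto intro: odd_pos)
  define c where "c = - cis (2 * \<theta>)"
  note cM = neg_cis_double_power_odd[OF assms, folded c_def]
  have "complex_of_real (1 / (cos (\<theta> + pi * real i / real M))^2)
      = - 4 * (c * cis (2 * pi / real M) ^ i / (1 - c * cis (2 * pi / real M) ^ i)^2)" for i
    using inverse_cos_squared_eq_cis_double[of "\<theta> + pi * real i / real M"]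
      one_minus_rotation_ne_0[OF cM(2), of i]
    unfolding cis_double_shift c_def by (simp add: add_eq_0_iff)
  then have "complex_of_real (\<Sum>i<M. 1 / (cos (\<theta> + pi * real i / real M))^2)
      = - 4 * (\<Sum>i<M. c * cis (2 * pi / real M) ^ i / (1 - c * cis (2 * pi / real M) ^ i)^2)"
    by (simp add: sum_distrib_left)
  also have "\<dots> = M^2 * (- 4 * c ^ M / (1 - c ^ M)^2)"
    unfolding sum_rotation_over_square[OF cM(2)] by (simp add: algebra_simps)
  also have "\<dots> = complex_of_real ((real M)^2 / (cos (real M * \<theta>))^2)"
    using inverse_cos_squared_eq_cis_double[of "real M * \<theta>"] cM
    by (simp add: c_def minus_equation_iff divide_inverse mult.assoc)
  finally show ?thesis
    by (simp only: of_real_eq_iff)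
qed

section \<open>Angles that are rational multiples of \<open>\<pi>\<close>\<close>

abbreviation pi_frac :: "int \<Rightarrow> int \<Rightarrow> real" where
  "pi_frac n d \<equiv> pi * of_int n / of_int d"

lemma cot_add_int_pi: "cot (x + of_int k * pi) = cot x"
  by (simp add: cot_altdef)

lemma cos_squared_add_int_pi: "(cos (x + of_int k * pi))^2 = (cos x)^2"
proof -
  have "sin (of_int k * pi) = 0"
    by (simp add: sin_zero_iff_int2)
  moreover from this have "(cos (of_int k * pi))^2 = 1"
    using sin_cos_squared_add[of "of_int k * pi"] by simp
  ultimately show ?thesis
    by (simp add: cos_add power_mult_distrib)
qed

lemma pi_frac_eq_mod:
  assumes "d \<noteq> 0"
  shows "pi_frac x d = pi_frac (x mod d) d + of_int (x div d) * pi"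
proof -
  have "real_of_int x = of_int (x mod d) + of_int d * of_int (x div d)"
    by (metis mod_mult_div_eq of_int_add of_int_mult)
  then show ?thesis
    using assms by (simp add: field_simps)
qed

lemma cot_pi_frac_mod: "d \<noteq> 0 \<Longrightarrow> cot (pi_frac x d) = cot (pi_frac (x mod d) d)"
  by (subst pi_frac_eq_mod) (simp_all add: cot_add_int_pi)

lemma tan_pi_frac_mod: "d \<noteq> 0 \<Longrightarrow> tan (pi_frac x d) = tan (pi_frac (x mod d) d)"
  by (subst pi_frac_eq_mod) simp_all

lemma of_int_mult_pi_frac: "of_int c * pi_frac n d = pi_frac (c * n) d"
  by simp

lemma pi_frac_add:
  "p \<noteq> 0 \<Longrightarrow> q \<noteq> 0 \<Longrightarrow> pi_frac m q + pi_frac j p = pi_frac (p * m + q * j) (p * q)"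
  by (simp add: field_simps)

lemma cos_pi_frac_odd_ne_0:
  assumes "odd d"
  shows "cos (pi_frac a d) \<noteq> 0"
proof
  assume "cos (pi_frac a d) = 0"
  then obtain i where "odd i" "pi_frac a d = of_int i * (pi / 2)"
    by (auto simp: cos_zero_iff_int)
  moreover have "d \<noteq> 0"
    using assms by auto
  ultimately have "2 * a = i * d"
    by (simp add: field_simps flip: of_int_mult of_int_eq_iff)
  then show False
    using \<open>odd i\<close> assms by (metis even_mult_iff dvd_triv_left)
qed

lemma sin_pi_frac_eq_0_iff:
  assumes "d \<noteq> 0"
  shows "sin (pi_frac a d) = 0 \<longleftrightarrow> d dvd a"
proof
  assume "sin (pi_frac a d) = 0"
  then obtain i :: int where "pi_frac a d = of_int i * pi"
    by (auto simp: sin_zero_iff_int2)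
  then have "a = i * d"
    using assms by (simp add: field_simps flip: of_int_mult of_int_eq_iff)
  then show "d dvd a"
    by simp
next
  assume "d dvd a"
  then obtain i where "a = d * i" ..
  then have "pi_frac a d = of_int i * pi"
    using assms by simp
  then show "sin (pi_frac a d) = 0"
    by (simp add: sin_zero_iff_int2)
qed

lemma cot_pi_frac_eq_0:
  assumes "d dvd n"
  shows "cot (pi_frac n d) = 0"
proof (cases "d = 0")
  case False
  from assms obtain i where "n = d * i" ..
  with False have "pi_frac n d = of_int i * pi"
    by simp
  then show ?thesis
    by (simp add: cot_def sin_zero_iff_int2)
qed simp

lemma cot_add_div_cos_squared:
  assumes "cos \<phi> \<noteq> 0" and "cos C \<noteq> 0" and "sin (C + \<phi>) \<noteq> 0"
  shows "cot (C + \<phi>) / (cos \<phi>)^2 = (tan \<phi> + cot (C + \<phi>)) / (cos C)^2 - tan C / (cos \<phi>)^2"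
proof -
  have C: "cot (C + \<phi>) + tan C = cos \<phi> / (sin (C + \<phi>) * cos C)"
    and \<phi>: "cot (C + \<phi>) + tan \<phi> = cos C / (sin (C + \<phi>) * cos \<phi>)"
    using assms cos_diff[of "C + \<phi>" C] cos_diff[of "C + \<phi>" \<phi>]
    by (simp_all add: cot_def tan_def field_simps)
  have "(cot (C + \<phi>) + tan C) / (cos \<phi>)^2 = (cot (C + \<phi>) + tan \<phi>) / (cos C)^2"
    unfolding C \<phi> using assms by (simp add: field_simps power2_eq_square)
  then show ?thesis
    by (simp add: add_divide_distrib algebra_simps)
qed

text \<open>When \<open>C + e x\<close> is a multiple of \<pi>, the cotangents vanish (\<open>cot\<close> is \<open>0\<close> at its poles)
  and the identity only holds up to the correction term.\<close>

lemma cot_add_sign_div_cos_squared: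
  fixes e x C :: real
  assumes e: "e = 1 \<or> e = -1" and "cos x \<noteq> 0" and "cos C \<noteq> 0"
  shows "cot (C + e * x) / (cos x)^2 = (e * tan x + cot (C + e * x)) / (cos C)^2 - tan C / (cos x)^2
           + (if sin (C + e * x) = 0 then 2 * tan C / (cos C)^2 else 0)"
proof (cases "sin (C + e * x) = 0")
  case False
  have "cos (e * x) \<noteq> 0" "(cos (e * x))^2 = (cos x)^2" "tan (e * x) = e * tan x"
    using e \<open>cos x \<noteq> 0\<close> by auto
  then show ?thesis
    using cot_add_div_cos_squared[of "e * x" C] False assms(3) by simp
next
  case True
  then obtain m :: int where "e * x = - C + of_int m * pi"
    by (auto simp: sin_zero_iff_int2 algebra_simps)
  then have "tan (e * x) = - tan C" and "(cos (e * x))^2 = (cos C)^2"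
    by (simp_all only: tan_periodic_int tan_minus cos_squared_add_int_pi cos_minus)
  moreover have "tan (e * x) = e * tan x" and "cos (e * x) = cos x"
    using e by auto
  ultimately show ?thesis
    using True assms(3) by (simp add: cot_def field_simps)
qed

lemma cot_div_cos_squared: "cos u \<noteq> 0 \<Longrightarrow> cot u / (cos u)^2 = cot u + tan u"
  using sin_cos_squared_add[of u]
  by (cases "sin u = 0") (simp_all add: cot_def tan_def field_simps power2_eq_square)

lemma tan_mult_cot: "cos u \<noteq> 0 \<Longrightarrow> tan u * cot u = (if sin u = 0 then 0 else 1)"
  by (simp add: cot_def tan_def)

lemma tan_cubed_mult_cot: "cos u \<noteq> 0 \<Longrightarrow> (tan u)^3 * cot u = (tan u)^2"
proof -
  assume "cos u \<noteq> 0"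
  have "(tan u)^3 * cot u = (tan u)^2 * (tan u * cot u)"
    by (simp add: power3_eq_cube power2_eq_square)
  then show ?thesis
    using tan_mult_cot[OF \<open>cos u \<noteq> 0\<close>] by (cases "sin u = 0") (simp_all add: tan_def)
qed

lemma inverse_cos_squared_eq_one_plus_tan_squared:
  "cos u \<noteq> 0 \<Longrightarrow> 1 / (cos u)^2 = 1 + (tan u)^2"
  by (simp add: tan_sec inverse_eq_divide power_one_over)

lemma tan_mult_cot_add:
  assumes "cos z \<noteq> 0" and "cos a \<noteq> 0" and "sin (z + a) \<noteq> 0"
  shows "tan z * cot (z + a) = 1 - tan a * tan z - tan a * cot (z + a)"
proof -
  have "(tan z + tan a) * cot (z + a) = cos (z + a) / (cos z * cos a)"
    using assms by (simp add: add_tan_eq cot_def)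
  also have "\<dots> = 1 - tan a * tan z"
    using assms by (simp add: tan_def cos_add field_simps)
  finally show ?thesis
    by (simp add: algebra_simps)
qed

lemma tan_mult_tan_add:
  assumes "cos z \<noteq> 0" and "cos (z + a) \<noteq> 0" and "sin a \<noteq> 0"
  shows "tan z * tan (z + a) = cot a * (tan (z + a) - tan z) - 1"
proof -
  have "tan (z + a) - tan z = sin a / (cos (z + a) * cos z)"
    using assms sin_diff[of "z + a" z] by (simp add: tan_def field_simps)
  then have "cot a * (tan (z + a) - tan z) = cos a / (cos (z + a) * cos z)"
    using assms by (simp add: cot_def)
  also have "\<dots> = 1 + tan z * tan (z + a)"
    using assms cos_diff[of "z + a" z] by (simp add: tan_def field_simps)
  finally show ?thesis
    by simp
qed

lemma cube_mult_eq_of_mult_eq: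
  fixes X K t :: real
  assumes "X * K = 1 - t * X - t * K"
  shows "X^3 * K = (1 + t^2) * X^2 - t * X^3 - (t + t^3) * X + t^2 - t^3 * K"
proof -
  have "X^3 * K - ((1 + t^2) * X^2 - t * X^3 - (t + t^3) * X + t^2 - t^3 * K)
      = (X^2 - t * X + t^2) * (X * K - (1 - t * X - t * K))"
    by algebra
  then show ?thesis
    using assms by simp
qed

lemma sum_int_atLeastLessThan_eq_nat: "(\<Sum>i\<in>{0..<int M}. g i) = (\<Sum>i<M. g (int i))"
proof -
  have "{0..<int M} = int ` {..<M}"
    using image_int_atLeastLessThan[of 0 M] by (simp add: lessThan_atLeast0)
  then show ?thesis
    by (simp add: sum.reindex)
qed

lemma sum_atLeastLessThan_int_split_first:
  fixes f :: "int \<Rightarrow> 'a::comm_monoid_add"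
  assumes "0 < p"
  shows "(\<Sum>j\<in>{0..<p}. f j) = f 0 + (\<Sum>j\<in>{1..<p}. f j)"
proof -
  have "{0..<p} = insert 0 {1..<p}"
    using assms by auto
  then show ?thesis
    by simp
qed

lemma sum_atLeastLessThan_int_const_from_1:
  fixes f :: "int \<Rightarrow> real"
  assumes "0 < p" and "\<And>j. j \<in> {1..<p} \<Longrightarrow> f j = c"
  shows "(\<Sum>j\<in>{0..<p}. f j) = f 0 + (of_int p - 1) * c"
  using assms by (simp add: sum_atLeastLessThan_int_split_first)

lemma sum_linear_combination:
  fixes f g h u :: "'a \<Rightarrow> real"
  shows "(\<Sum>i\<in>A. a * f i + b * g i - c * h i + d * u i) = a * sum f A + b * sum g A - c * sum h A + d * sum u A"
  by (simp add: sum.distrib sum_subtractf sum_distrib_left)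

lemma sum_linear_combination_const:
  fixes f g h u :: "'a \<Rightarrow> real"
  shows "(\<Sum>m\<in>A. a * f m - b * g m - c * h m + d - r * u m)
    = a * sum f A - b * sum g A - c * sum h A + of_nat (card A) * d - r * sum u A"
  by (simp add: sum.distrib sum_subtractf sum_distrib_left)

lemma sum_periodic_affine_reindex:
  fixes f :: "int \<Rightarrow> 'a::comm_monoid_add"
  assumes "0 < m" and "coprime a m" and "\<And>x. f x = f (x mod m)"
  shows "(\<Sum>i\<in>{0..<m}. f (c + a * i)) = (\<Sum>i\<in>{0..<m}. f i)"
proof -
  let ?g = "\<lambda>i. (c + a * i) mod m"
  have inj: "inj_on ?g {0..<m}"
  proof
    fix i j assume "i \<in> {0..<m}" "j \<in> {0..<m}" "?g i = ?g j"
    moreover from \<open>?g i = ?g j\<close> have "[i = j] (mod m)"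
      using assms(2) by (simp flip: cong_def add: cong_add_lcancel cong_mult_lcancel)
    ultimately show "i = j"
      by (auto intro: cong_less_imp_eq_int)
  qed
  have "?g ` {0..<m} = {0..<m}"
  proof (rule card_subset_eq)
    show "?g ` {0..<m} \<subseteq> {0..<m}"
      using assms(1) by auto
    show "card (?g ` {0..<m}) = card {0..<m}"
      using inj by (simp add: card_image)
  qed simp
  then have "(\<Sum>i\<in>{0..<m}. f i) = (\<Sum>i\<in>{0..<m}. f (?g i))"
    using sum.reindex[OF inj, of f] by simp
  also have "\<dots> = (\<Sum>i\<in>{0..<m}. f (c + a * i))"
    using assms(3) by simp
  finally show ?thesis ..
qed

lemma sum_odd_periodic_eq_0:
  fixes f :: "int \<Rightarrow> real"
  assumes "0 < m" and "\<And>x. f x = f (x mod m)" and "\<And>x. f (- x) = - f x"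
  shows "(\<Sum>i\<in>{0..<m}. f i) = 0"
proof -
  have "(\<Sum>i\<in>{0..<m}. f (0 + (- 1) * i)) = (\<Sum>i\<in>{0..<m}. f i)"
    using sum_periodic_affine_reindex[of m "- 1" f 0] assms(1,2) by simp
  then show ?thesis
    using assms(3) by (simp add: sum_negf)
qed

lemma sum_mixed_radix:
  fixes f :: "int \<Rightarrow> 'a::comm_monoid_add"
  assumes "0 < p" and "0 < q"
  shows "(\<Sum>n\<in>{0..<p * q}. f n) = (\<Sum>b\<in>{0..<q}. \<Sum>i\<in>{0..<p}. f (b + q * i))"
proof -
  have "b + q * i < p * q" if "b < q" "i < p" for b i
  proof -
    have "q * i \<le> q * (p - 1)"
      using that assms by (intro mult_left_mono) auto
    then show ?thesis
      using that by (simp add: algebra_simps)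
  qed
  moreover have "n div q < p" if "n < p * q" for n
  proof -
    have "q * (n div q) = n - n mod q"
      by (simp add: minus_mod_eq_mult_div)
    also have "\<dots> < q * p"
      using that pos_mod_sign[OF assms(2), of n] by (simp only: mult.commute[of q])
    finally show ?thesis
      using assms(2) by simp
  qed
  ultimately have "(\<Sum>(b, i)\<in>{0..<q} \<times> {0..<p}. f (b + q * i)) = (\<Sum>n\<in>{0..<p * q}. f n)"
    by (intro sum.reindex_bij_witness[where j="\<lambda>(b, i). b + q * i" and i="\<lambda>n. (n mod q, n div q)"])
       (use assms in \<open>auto simp: pos_imp_zdiv_nonneg_iff\<close>)
  then show ?thesis
    by (simp add: sum.cartesian_product)
qed

lemma sum_nondivisors_eq_sum_atLeastLessThan:
  fixes f :: "int \<Rightarrow> 'a::comm_monoid_add"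
  assumes "\<And>n. p dvd n \<or> q dvd n \<Longrightarrow> f n = 0"
  shows "(\<Sum>n\<in>{n\<in>{1..p*q-1}. \<not> p dvd n \<and> \<not> q dvd n}. f n) = (\<Sum>n\<in>{0..<p*q}. f n)"
proof (rule sum.mono_neutral_left)
  show "\<forall>n\<in>{0..<p*q} - {n\<in>{1..p*q-1}. \<not> p dvd n \<and> \<not> q dvd n}. f n = 0"
    using assms by (metis (mono_tags, lifting) DiffE atLeastAtMost_iff atLeastLessThan_iff
        dvd_0_right mem_Collect_eq order_le_less zle_diff1_eq int_one_le_iff_zero_less)
qed auto

lemma sum_cot_shifts_int:
  assumes "0 < m" and "sin (of_int m * \<theta>) \<noteq> 0"
  shows "(\<Sum>i\<in>{0..<m}. cot (\<theta> + pi_frac i m)) = of_int m * cot (of_int m * \<theta>)"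
proof -
  obtain M where "m = int M" "0 < M"
    using assms(1) by (metis pos_int_cases)
  then show ?thesis
    using sum_cot_shifts[of M \<theta>] assms(2) by (simp add: sum_int_atLeastLessThan_eq_nat)
qed

lemma sum_tan_shifts_odd_int:
  assumes "odd m" and "0 < m" and "cos (of_int m * \<theta>) \<noteq> 0"
  shows "(\<Sum>i\<in>{0..<m}. tan (\<theta> + pi_frac i m)) = of_int m * tan (of_int m * \<theta>)"
proof -
  obtain M where "m = int M" "odd M"
    using assms(1,2) by (metis pos_int_cases even_of_nat)
  then show ?thesis
    using sum_tan_shifts_odd[of M \<theta>] assms(3) by (simp add: sum_int_atLeastLessThan_eq_nat)
qed

lemma sum_inverse_cos_squared_shifts_odd_int:
  assumes "odd m" and "0 < m" and "cos (of_int m * \<theta>) \<noteq> 0"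
  shows "(\<Sum>i\<in>{0..<m}. 1 / (cos (\<theta> + pi_frac i m))^2) = (of_int m)^2 / (cos (of_int m * \<theta>))^2"
proof -
  obtain M where "m = int M" "odd M"
    using assms(1,2) by (metis pos_int_cases even_of_nat)
  then show ?thesis
    using sum_inverse_cos_squared_shifts_odd[of M \<theta>] assms(3)
    by (simp add: sum_int_atLeastLessThan_eq_nat)
qed

lemma sum_tan_pi_frac:
  assumes "odd d" and "0 < d"
  shows "(\<Sum>m\<in>{0..<d}. tan (pi_frac m d)) = 0"
  using sum_tan_shifts_odd_int[OF assms, of 0] by simp

lemma sum_tan_cubed_pi_frac:
  assumes "0 < d"
  shows "(\<Sum>m\<in>{0..<d}. (tan (pi_frac m d))^3) = 0"
proof (rule sum_odd_periodic_eq_0[OF assms])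
  show "(tan (pi_frac x d))^3 = (tan (pi_frac (x mod d) d))^3" for x
    using assms tan_pi_frac_mod[of d x] by simp
qed simp

lemma sum_inverse_cos_squared_pi_frac:
  assumes "odd d" and "0 < d"
  shows "(\<Sum>m\<in>{0..<d}. 1 / (cos (pi_frac m d))^2) = (of_int d)^2"
  using sum_inverse_cos_squared_shifts_odd_int[OF assms, of 0] by simp

lemma sum_tan_squared_pi_frac:
  assumes "odd d" and "0 < d"
  shows "(\<Sum>m\<in>{0..<d}. (tan (pi_frac m d))^2) = (of_int d)^2 - of_int d"
proof -
  have "(\<Sum>m\<in>{0..<d}. (tan (pi_frac m d))^2) = (\<Sum>m\<in>{0..<d}. 1 / (cos (pi_frac m d))^2 - 1)"
    using cos_pi_frac_odd_ne_0[OF assms(1)]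
    by (simp add: inverse_cos_squared_eq_one_plus_tan_squared)
  also have "\<dots> = (of_int d)^2 - of_int d"
    using assms by (simp add: sum_subtractf sum_inverse_cos_squared_pi_frac)
  finally show ?thesis .
qed

lemma sum_tan_mult_cot_pi_frac:
  assumes "odd d" and "0 < d"
  shows "(\<Sum>m\<in>{0..<d}. tan (pi_frac m d) * cot (pi_frac m d)) = of_int d - 1"
proof -
  have "tan (pi_frac m d) * cot (pi_frac m d) = 1" if "m \<in> {1..<d}" for m
    using that assms tan_mult_cot[OF cos_pi_frac_odd_ne_0[OF assms(1)]]
    by (simp add: sin_pi_frac_eq_0_iff zdvd_not_zless)
  then show ?thesis
    using assms by (simp add: sum_atLeastLessThan_int_split_first)
qed

lemma sum_tan_cubed_mult_cot_pi_frac: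
  assumes "odd d" and "0 < d"
  shows "(\<Sum>m\<in>{0..<d}. (tan (pi_frac m d))^3 * cot (pi_frac m d)) = (of_int d)^2 - of_int d"
  using cos_pi_frac_odd_ne_0[OF assms(1)] sum_tan_squared_pi_frac[OF assms]
  by (simp add: tan_cubed_mult_cot)

lemma sum_cot_pi_frac_affine:
  assumes "0 < p" and "coprime q p"
  shows "(\<Sum>i\<in>{0..<p}. cot (pi_frac (b + q * i) p)) = 0"
proof -
  have per: "cot (pi_frac x p) = cot (pi_frac (x mod p) p)" for x
    using assms(1) by (intro cot_pi_frac_mod) simp
  have "(\<Sum>i\<in>{0..<p}. cot (pi_frac (b + q * i) p)) = (\<Sum>i\<in>{0..<p}. cot (pi_frac i p))"
    using sum_periodic_affine_reindex[where f = "\<lambda>x. cot (pi_frac x p)", OF assms(1,2) per] .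
  also have "\<dots> = 0"
    using sum_odd_periodic_eq_0[where f = "\<lambda>x. cot (pi_frac x p)", OF assms(1) per] by simp
  finally show ?thesis .
qed

lemma sum_indicator_dvd_affine:
  fixes p q b :: int
  assumes "0 < p" and "coprime q p"
  shows "(\<Sum>i\<in>{0..<p}. if p dvd (b + q * i) then 1 else 0 :: real) = 1"
proof -
  have "(\<Sum>i\<in>{0..<p}. if p dvd (b + q * i) then 1 else 0 :: real)
      = (\<Sum>i\<in>{0..<p}. if p dvd i then 1 else 0)"
    by (rule sum_periodic_affine_reindex[where f = "\<lambda>x. if p dvd x then 1 else 0", OF assms])
       (simp add: dvd_mod_iff)
  also have "\<dots> = 1"
    using assms(1) by (simp add: sum_atLeastLessThan_int_split_first zdvd_not_zless)
  finally show ?thesis .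
qed

section \<open>The sum for \<open>q = k p \<plusminus> 1\<close>\<close>

locale near_multiple_pair =
  fixes p q k e :: int
  assumes p_pos: "0 < p" and q_pos: "0 < q" and odd_p: "odd p" and odd_q: "odd q"
    and coprime: "coprime p q" and q_eq: "q = k * p + e" and e_cases: "e = 1 \<or> e = -1"
begin

lemma nonzero: "p \<noteq> 0" "q \<noteq> 0" "p * q \<noteq> 0"
  using p_pos q_pos by simp_all

lemma pi_frac_q_add_pi_frac_p: "pi_frac m q + pi_frac j p = pi_frac (p * m + q * j) (p * q)"
  using p_pos q_pos by (simp add: pi_frac_add)

lemma cos_ne_0:
  "cos (pi_frac m q) \<noteq> 0" "cos (pi_frac j p) \<noteq> 0" "cos (pi_frac n (p * q)) \<noteq> 0"
  "cos (of_int p * pi_frac m q) \<noteq> 0" "cos (of_int q * pi_frac j p) \<noteq> 0"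
  "cos (pi_frac m q + pi_frac j p) \<noteq> 0"
  unfolding of_int_mult_pi_frac pi_frac_q_add_pi_frac_p
  by (rule cos_pi_frac_odd_ne_0; use odd_p odd_q in simp)+

lemma sin_eq_0_iff:
  "sin (pi_frac m q) = 0 \<longleftrightarrow> q dvd m" "sin (pi_frac j p) = 0 \<longleftrightarrow> p dvd j"
  "sin (of_int p * pi_frac m q) = 0 \<longleftrightarrow> q dvd m" "sin (of_int q * pi_frac j p) = 0 \<longleftrightarrow> p dvd j"
  unfolding of_int_mult_pi_frac sin_pi_frac_eq_0_iff[OF nonzero(1)] sin_pi_frac_eq_0_iff[OF nonzero(2)]
  using coprime by (simp_all add: coprime_dvd_mult_right_iff coprime_commute[of p q])

lemma sin_pi_frac_add_ne_0:
  assumes "j \<in> {1..<p}"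
  shows "sin (pi_frac m q + pi_frac j p) \<noteq> 0"
proof
  assume "sin (pi_frac m q + pi_frac j p) = 0"
  then have "p * q dvd p * m + q * j"
    unfolding pi_frac_q_add_pi_frac_p sin_pi_frac_eq_0_iff[OF nonzero(3)] .
  then have "p dvd q * j"
    by (meson dvd_add_right_iff dvd_mult_left dvd_triv_left)
  then show False
    using coprime assms by (auto simp: coprime_dvd_mult_right_iff zdvd_not_zless)
qed

lemma sin_pi_frac_p_ne_0: "j \<in> {1..<p} \<Longrightarrow> sin (pi_frac j p) \<noteq> 0"
  by (auto simp: sin_eq_0_iff zdvd_not_zless)

lemma tan_mult_cot_pi_frac_p: "j \<in> {1..<p} \<Longrightarrow> tan (pi_frac j p) * cot (pi_frac j p) = 1"
  using tan_mult_cot[OF cos_ne_0(2)] sin_pi_frac_p_ne_0 by simp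

lemma of_int_q_mult_pi_frac_p: "of_int q * pi_frac j p = of_int e * pi_frac j p + of_int (k * j) * pi"
  using p_pos unfolding q_eq by (simp add: field_simps)

lemma sum_cot_pi_frac_q_add:
  assumes "j \<in> {1..<p}"
  shows "(\<Sum>m\<in>{0..<q}. cot (pi_frac m q + pi_frac j p)) = of_int e * of_int q * cot (pi_frac j p)"
proof -
  have "sin (of_int q * pi_frac j p) \<noteq> 0"
    unfolding sin_eq_0_iff using assms by (auto simp: zdvd_not_zless)
  then have "(\<Sum>m\<in>{0..<q}. cot (pi_frac j p + pi_frac m q)) = of_int q * cot (of_int q * pi_frac j p)"
    by (rule sum_cot_shifts_int[OF q_pos])
  also have "cot (of_int q * pi_frac j p) = of_int e * cot (pi_frac j p)"
    unfolding of_int_q_mult_pi_frac_p cot_add_int_pi using e_cases by auto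
  finally show ?thesis
    by (simp add: add.commute)
qed

lemma sum_tan_pi_frac_q_add:
  "(\<Sum>m\<in>{0..<q}. tan (pi_frac m q + pi_frac j p)) = of_int e * of_int q * tan (pi_frac j p)"
proof -
  have "(\<Sum>m\<in>{0..<q}. tan (pi_frac j p + pi_frac m q)) = of_int q * tan (of_int q * pi_frac j p)"
    by (rule sum_tan_shifts_odd_int[OF odd_q q_pos cos_ne_0(5)])
  also have "tan (of_int q * pi_frac j p) = of_int e * tan (pi_frac j p)"
    unfolding of_int_q_mult_pi_frac_p tan_periodic_int using e_cases by auto
  finally show ?thesis
    by (simp add: add.commute)
qed

lemma sum_mult_cot_p_mult_expand:
  assumes "\<And>m. q dvd m \<Longrightarrow> h m = 0"
  shows "(\<Sum>m\<in>{0..<q}. h m * cot (of_int p * pi_frac m q))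
    = (\<Sum>j\<in>{0..<p}. \<Sum>m\<in>{0..<q}. h m * cot (pi_frac m q + pi_frac j p)) / of_int p"
proof -
  have "h m * cot (of_int p * pi_frac m q)
      = (\<Sum>j\<in>{0..<p}. h m * cot (pi_frac m q + pi_frac j p)) / of_int p" for m
  proof (cases "q dvd m")
    case False
    then have "sin (of_int p * pi_frac m q) \<noteq> 0"
      unfolding sin_eq_0_iff .
    then have "(\<Sum>j\<in>{0..<p}. cot (pi_frac m q + pi_frac j p)) = of_int p * cot (of_int p * pi_frac m q)"
      by (rule sum_cot_shifts_int[OF p_pos])
    then show ?thesis
      using p_pos by (simp flip: sum_distrib_left)
  qed (simp add: assms)
  then show ?thesis
    by (simp add: sum_divide_distrib sum.swap[of _ "{0..<p}"])
qed

lemma sum_mult_tan_p_mult_expand: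
  "(\<Sum>m\<in>{0..<q}. h m * tan (of_int p * pi_frac m q))
    = (\<Sum>j\<in>{0..<p}. \<Sum>m\<in>{0..<q}. h m * tan (pi_frac m q + pi_frac j p)) / of_int p"
proof -
  have "h m * tan (of_int p * pi_frac m q)
      = (\<Sum>j\<in>{0..<p}. h m * tan (pi_frac m q + pi_frac j p)) / of_int p" for m
    using sum_tan_shifts_odd_int[OF odd_p p_pos cos_ne_0(4)] p_pos
    by (simp flip: sum_distrib_left)
  then show ?thesis
    by (simp add: sum_divide_distrib sum.swap[of _ "{0..<p}"])
qed

lemma tan_pi_frac_q_eq_0: "q dvd m \<Longrightarrow> tan (pi_frac m q) = 0"
  by (simp add: tan_def sin_eq_0_iff)

lemma sum_tan_mult_cot_p_mult:
  "(\<Sum>m\<in>{0..<q}. tan (pi_frac m q) * cot (of_int p * pi_frac m q))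
    = (of_int q - 1 + (of_int p - 1) * (1 - of_int e) * of_int q) / of_int p"
proof -
  have column: "(\<Sum>m\<in>{0..<q}. tan (pi_frac m q) * cot (pi_frac m q + pi_frac j p))
      = (1 - of_int e) * of_int q" if "j \<in> {1..<p}" for j
  proof -
    have "(\<Sum>m\<in>{0..<q}. tan (pi_frac m q) * cot (pi_frac m q + pi_frac j p))
        = (\<Sum>m\<in>{0..<q}. 1 - tan (pi_frac j p) * tan (pi_frac m q)
                          - tan (pi_frac j p) * cot (pi_frac m q + pi_frac j p))"
      using that by (intro sum.cong refl tan_mult_cot_add cos_ne_0 sin_pi_frac_add_ne_0)
    also have "\<dots> = of_int q - of_int e * of_int q * (tan (pi_frac j p) * cot (pi_frac j p))"
      using q_pos that
      by (simp add: sum_subtractf sum_tan_pi_frac[OF odd_q q_pos] sum_cot_pi_frac_q_add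
          flip: sum_distrib_left)
    also have "tan (pi_frac j p) * cot (pi_frac j p) = 1"
      by (rule tan_mult_cot_pi_frac_p[OF that])
    finally show ?thesis
      by (simp add: algebra_simps)
  qed
  have "(\<Sum>j\<in>{0..<p}. \<Sum>m\<in>{0..<q}. tan (pi_frac m q) * cot (pi_frac m q + pi_frac j p))
      = of_int q - 1 + (of_int p - 1) * ((1 - of_int e) * of_int q)"
    using sum_tan_mult_cot_pi_frac[OF odd_q q_pos]
    by (subst sum_atLeastLessThan_int_const_from_1[OF p_pos column]) simp_all
  moreover have "(\<Sum>m\<in>{0..<q}. tan (pi_frac m q) * cot (of_int p * pi_frac m q))
      = (\<Sum>j\<in>{0..<p}. \<Sum>m\<in>{0..<q}. tan (pi_frac m q) * cot (pi_frac m q + pi_frac j p)) / of_int p"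
    by (rule sum_mult_cot_p_mult_expand) (rule tan_pi_frac_q_eq_0)
  ultimately show ?thesis
    by (simp add: mult.assoc)
qed

lemma sum_tan_mult_tan_p_mult:
  "(\<Sum>m\<in>{0..<q}. tan (pi_frac m q) * tan (of_int p * pi_frac m q))
    = ((of_int q)^2 - of_int q + (of_int p - 1) * (of_int e - 1) * of_int q) / of_int p"
proof -
  have column: "(\<Sum>m\<in>{0..<q}. tan (pi_frac m q) * tan (pi_frac m q + pi_frac j p))
      = (of_int e - 1) * of_int q" if "j \<in> {1..<p}" for j
  proof -
    have "(\<Sum>m\<in>{0..<q}. tan (pi_frac m q) * tan (pi_frac m q + pi_frac j p))
        = (\<Sum>m\<in>{0..<q}. cot (pi_frac j p) * (tan (pi_frac m q + pi_frac j p) - tan (pi_frac m q)) - 1)"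
      using that by (intro sum.cong refl tan_mult_tan_add cos_ne_0 sin_pi_frac_p_ne_0)
    also have "\<dots> = of_int e * of_int q * (tan (pi_frac j p) * cot (pi_frac j p)) - of_int q"
      using q_pos
      by (simp add: sum_subtractf sum_tan_pi_frac[OF odd_q q_pos] sum_tan_pi_frac_q_add
          flip: sum_distrib_left)
    also have "tan (pi_frac j p) * cot (pi_frac j p) = 1"
      by (rule tan_mult_cot_pi_frac_p[OF that])
    finally show ?thesis
      by (simp add: algebra_simps)
  qed
  have "(\<Sum>j\<in>{0..<p}. \<Sum>m\<in>{0..<q}. tan (pi_frac m q) * tan (pi_frac m q + pi_frac j p))
      = (of_int q)^2 - of_int q + (of_int p - 1) * ((of_int e - 1) * of_int q)"
    using sum_tan_squared_pi_frac[OF odd_q q_pos]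
    by (subst sum_atLeastLessThan_int_const_from_1[OF p_pos column]) (simp_all add: power2_eq_square)
  then show ?thesis
    unfolding sum_mult_tan_p_mult_expand by simp
qed

lemma sum_tan_cubed_mult_cot_pi_frac_q_add:
  assumes "j \<in> {1..<p}"
  shows "(\<Sum>m\<in>{0..<q}. (tan (pi_frac m q))^3 * cot (pi_frac m q + pi_frac j p))
    = (of_int q)^2 - of_int q + ((of_int q)^2 - of_int e * of_int q) * (tan (pi_frac j p))^2"
proof -
  let ?t = "tan (pi_frac j p)"
  have "(\<Sum>m\<in>{0..<q}. (tan (pi_frac m q))^3 * cot (pi_frac m q + pi_frac j p))
      = (\<Sum>m\<in>{0..<q}. (1 + ?t^2) * (tan (pi_frac m q))^2 - ?t * (tan (pi_frac m q))^3
          - (?t + ?t^3) * tan (pi_frac m q) + ?t^2 - ?t^3 * cot (pi_frac m q + pi_frac j p))"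
    using assms
    by (intro sum.cong refl cube_mult_eq_of_mult_eq tan_mult_cot_add cos_ne_0 sin_pi_frac_add_ne_0)
  also have "\<dots> = (1 + ?t^2) * ((of_int q)^2 - of_int q) + of_int q * ?t^2
      - of_int e * of_int q * ?t^2 * (?t * cot (pi_frac j p))"
    unfolding sum_linear_combination_const sum_tan_pi_frac[OF odd_q q_pos]
      sum_tan_squared_pi_frac[OF odd_q q_pos] sum_tan_cubed_pi_frac[OF q_pos]
      sum_cot_pi_frac_q_add[OF assms]
    using q_pos by (simp add: power3_eq_cube power2_eq_square algebra_simps)
  also have "?t * cot (pi_frac j p) = 1"
    by (rule tan_mult_cot_pi_frac_p[OF assms])
  finally show ?thesis
    by (simp add: algebra_simps)
qed

lemma sum_tan_cubed_mult_cot_p_mult: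
  "(\<Sum>m\<in>{0..<q}. (tan (pi_frac m q))^3 * cot (of_int p * pi_frac m q))
    = ((of_int q)^2 - of_int q + (of_int p - 1) * ((of_int q)^2 - of_int q)
       + ((of_int q)^2 - of_int e * of_int q) * ((of_int p)^2 - of_int p)) / of_int p"
proof -
  have "(\<Sum>j\<in>{1..<p}. (tan (pi_frac j p))^2) = (of_int p)^2 - of_int p"
    using sum_tan_squared_pi_frac[OF odd_p p_pos] by (simp add: sum_atLeastLessThan_int_split_first[OF p_pos])
  then have "(\<Sum>j\<in>{0..<p}. \<Sum>m\<in>{0..<q}. (tan (pi_frac m q))^3 * cot (pi_frac m q + pi_frac j p))
      = (of_int q)^2 - of_int q + (of_int p - 1) * ((of_int q)^2 - of_int q)
        + ((of_int q)^2 - of_int e * of_int q) * ((of_int p)^2 - of_int p)"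
    using p_pos sum_tan_cubed_mult_cot_pi_frac[OF odd_q q_pos]
    by (simp add: sum_atLeastLessThan_int_split_first[OF p_pos] sum_tan_cubed_mult_cot_pi_frac_q_add
        sum.distrib flip: sum_distrib_left)
  moreover have "(\<Sum>m\<in>{0..<q}. (tan (pi_frac m q))^3 * cot (of_int p * pi_frac m q))
      = (\<Sum>j\<in>{0..<p}. \<Sum>m\<in>{0..<q}. (tan (pi_frac m q))^3 * cot (pi_frac m q + pi_frac j p)) / of_int p"
    by (rule sum_mult_cot_p_mult_expand) (simp add: tan_pi_frac_q_eq_0)
  ultimately show ?thesis
    by simp
qed

text \<open>The sum of the summands over a residue class \<open>n \<equiv> b\<close> mod \<open>q\<close>, as a function of \<open>y = \<pi>b/q\<close>.\<close>

definition residue_class_sum :: "real \<Rightarrow> real" where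
  "residue_class_sum y = cot y * (of_int e * of_int p * tan y / (cos (of_int k * y))^2
     - (of_int p)^2 * tan (of_int k * y) / (cos y)^2 + 2 * tan (of_int k * y) / (cos (of_int k * y))^2)"

lemma residue_class_sum_add_int_pi: "residue_class_sum (y + of_int j * pi) = residue_class_sum y"
proof -
  have "of_int k * (y + of_int j * pi) = of_int k * y + of_int (k * j) * pi"
    by (simp add: algebra_simps)
  then show ?thesis
    unfolding residue_class_sum_def by (simp only: cot_add_int_pi tan_periodic_int cos_squared_add_int_pi)
qed

lemma summand_decomposition:
  "cot (pi_frac n p) * cot (pi_frac n q) / (cos (pi_frac n (p * q)))^2
    = of_int e * cot (pi_frac n q) / (cos (of_int k * pi_frac n q))^2 * tan (pi_frac n (p * q))
      + cot (pi_frac n q) / (cos (of_int k * pi_frac n q))^2 * cot (pi_frac n p)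
      - cot (pi_frac n q) * tan (of_int k * pi_frac n q) * (1 / (cos (pi_frac n (p * q)))^2)
      + 2 * cot (pi_frac n q) * tan (of_int k * pi_frac n q) / (cos (of_int k * pi_frac n q))^2
        * (if p dvd n then 1 else 0)"
proof -
  have "of_int k * pi_frac n q + of_int e * pi_frac n (p * q) = pi * of_int n * of_int (k * p + e) / of_int (p * q)"
    using nonzero by (simp add: field_simps)
  also have "\<dots> = pi_frac n p"
    using nonzero by (simp flip: q_eq)
  finally have angle: "of_int k * pi_frac n q + of_int e * pi_frac n (p * q) = pi_frac n p" .
  have e: "of_int e = (1::real) \<or> of_int e = -1"
    using e_cases by auto
  have "cos (of_int k * pi_frac n q) \<noteq> 0"
    unfolding of_int_mult_pi_frac by (rule cos_pi_frac_odd_ne_0[OF odd_q])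
  note identity = cot_add_sign_div_cos_squared[OF e cos_ne_0(3)[of n] this, unfolded angle sin_eq_0_iff(2)]
  have "cot (pi_frac n p) * cot (pi_frac n q) / (cos (pi_frac n (p * q)))^2
      = cot (pi_frac n q) * (cot (pi_frac n p) / (cos (pi_frac n (p * q)))^2)"
    by simp
  then show ?thesis
    unfolding identity by (cases "p dvd n") (simp_all add: add_divide_distrib diff_divide_distrib algebra_simps)
qed

lemma sum_residue_class:
  "(\<Sum>i\<in>{0..<p}. cot (pi_frac (b + q * i) p) * cot (pi_frac (b + q * i) q) / (cos (pi_frac (b + q * i) (p * q)))^2)
    = residue_class_sum (pi_frac b q)"
proof -
  define y where "y = pi_frac b q"
  define \<theta> where "\<theta> = pi_frac b (p * q)"
  have y_shift: "pi_frac (b + q * i) q = y + of_int i * pi" for i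
    using nonzero by (simp add: y_def field_simps)
  have ky_shift: "of_int k * pi_frac (b + q * i) q = of_int k * y + of_int (k * i) * pi" for i
    unfolding y_shift by (simp add: algebra_simps)
  have \<theta>_shift: "pi_frac (b + q * i) (p * q) = \<theta> + pi_frac i p" for i
    using nonzero by (simp add: \<theta>_def field_simps)
  have p\<theta>: "of_int p * \<theta> = y"
    using nonzero by (simp add: \<theta>_def y_def)
  have cos_p\<theta>: "cos (of_int p * \<theta>) \<noteq> 0"
    unfolding p\<theta> y_def by (rule cos_ne_0)
  have "(\<Sum>i\<in>{0..<p}. cot (pi_frac (b + q * i) p) * cot (pi_frac (b + q * i) q) / (cos (pi_frac (b + q * i) (p * q)))^2)
      = of_int e * cot y / (cos (of_int k * y))^2 * (\<Sum>i\<in>{0..<p}. tan (\<theta> + pi_frac i p))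
        + cot y / (cos (of_int k * y))^2 * (\<Sum>i\<in>{0..<p}. cot (pi_frac (b + q * i) p))
        - cot y * tan (of_int k * y) * (\<Sum>i\<in>{0..<p}. 1 / (cos (\<theta> + pi_frac i p))^2)
        + 2 * cot y * tan (of_int k * y) / (cos (of_int k * y))^2
          * (\<Sum>i\<in>{0..<p}. if p dvd (b + q * i) then 1 else 0)"
    unfolding summand_decomposition ky_shift unfolding y_shift \<theta>_shift cot_add_int_pi tan_periodic_int
      cos_squared_add_int_pi sum_linear_combination ..
  also have "\<dots> = of_int e * cot y / (cos (of_int k * y))^2 * (of_int p * tan y)
        - cot y * tan (of_int k * y) * ((of_int p)^2 / (cos y)^2)
        + 2 * cot y * tan (of_int k * y) / (cos (of_int k * y))^2"
    unfolding sum_tan_shifts_odd_int[OF odd_p p_pos cos_p\<theta>]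
      sum_inverse_cos_squared_shifts_odd_int[OF odd_p p_pos cos_p\<theta>]
      sum_cot_pi_frac_affine[OF p_pos coprime_commute[THEN iffD1, OF coprime]]
      sum_indicator_dvd_affine[OF p_pos coprime_commute[THEN iffD1, OF coprime]] p\<theta>
    by simp
  also have "\<dots> = residue_class_sum y"
    by (simp add: residue_class_sum_def algebra_simps)
  finally show ?thesis
    unfolding y_def .
qed

lemma residue_class_sum_p_mult:
  "residue_class_sum (of_int p * pi_frac m q)
    = of_int e * of_int p * (cot (of_int p * pi_frac m q) * tan (of_int p * pi_frac m q) / (cos (pi_frac m q))^2)
      + of_int e * (of_int p)^2 * (cot (of_int p * pi_frac m q) * tan (pi_frac m q) / (cos (of_int p * pi_frac m q))^2)
      - 2 * of_int e * (cot (of_int p * pi_frac m q) * tan (pi_frac m q) / (cos (pi_frac m q))^2)"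
proof -
  define z where "z = pi_frac m q"
  have "of_int k * (of_int p * z) = of_int q * z - of_int e * z"
    by (simp add: q_eq algebra_simps)
  also have "of_int q * z = of_int m * pi"
    using nonzero by (simp add: z_def)
  finally have kpz: "of_int k * (of_int p * z) = - (of_int e * z) + of_int m * pi"
    by simp
  have "tan (of_int k * (of_int p * z)) = - (of_int e * tan z)"
    unfolding kpz tan_periodic_int tan_minus using e_cases by auto
  moreover have "(cos (of_int k * (of_int p * z)))^2 = (cos z)^2"
    unfolding kpz cos_squared_add_int_pi cos_minus using e_cases by auto
  ultimately show ?thesis
    unfolding residue_class_sum_def z_def[symmetric] by (simp add: algebra_simps)
qed

lemma sum_cot_mult_tan_p_mult_div_cos_squared:
  "(\<Sum>m\<in>{0..<q}. cot (of_int p * pi_frac m q) * tan (of_int p * pi_frac m q) / (cos (pi_frac m q))^2)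
    = (of_int q)^2 - 1"
proof -
  have "(\<Sum>m\<in>{0..<q}. cot (of_int p * pi_frac m q) * tan (of_int p * pi_frac m q) / (cos (pi_frac m q))^2)
      = (\<Sum>m\<in>{1..<q}. 1 / (cos (pi_frac m q))^2)"
  proof -
    have "cot (of_int p * pi_frac m q) * tan (of_int p * pi_frac m q) = (if q dvd m then 0 else 1)" for m
      using tan_mult_cot[OF cos_ne_0(4)] sin_eq_0_iff(3) by (simp add: mult.commute)
    then show ?thesis
      using q_pos by (simp add: sum_atLeastLessThan_int_split_first zdvd_not_zless)
  qed
  also have "\<dots> = (of_int q)^2 - 1"
    using sum_inverse_cos_squared_pi_frac[OF odd_q q_pos]
    by (simp add: sum_atLeastLessThan_int_split_first[OF q_pos])
  finally show ?thesis .
qed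

lemma sum_cot_p_mult_mult_tan_div_cos_p_mult_squared:
  "(\<Sum>m\<in>{0..<q}. cot (of_int p * pi_frac m q) * tan (pi_frac m q) / (cos (of_int p * pi_frac m q))^2)
    = (\<Sum>m\<in>{0..<q}. tan (pi_frac m q) * cot (of_int p * pi_frac m q))
      + (\<Sum>m\<in>{0..<q}. tan (pi_frac m q) * tan (of_int p * pi_frac m q))"
proof -
  have "cot u * tan v / (cos u)^2 = tan v * cot u + tan v * tan u" if "cos u \<noteq> 0" for u v :: real
  proof -
    have "cot u * tan v / (cos u)^2 = tan v * (cot u / (cos u)^2)"
      by simp
    then show ?thesis
      unfolding cot_div_cos_squared[OF that] by (simp add: algebra_simps)
  qed
  then show ?thesis
    using cos_ne_0(4) by (simp add: sum.distrib)
qed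

lemma sum_cot_p_mult_mult_tan_div_cos_squared:
  "(\<Sum>m\<in>{0..<q}. cot (of_int p * pi_frac m q) * tan (pi_frac m q) / (cos (pi_frac m q))^2)
    = (\<Sum>m\<in>{0..<q}. tan (pi_frac m q) * cot (of_int p * pi_frac m q))
      + (\<Sum>m\<in>{0..<q}. (tan (pi_frac m q))^3 * cot (of_int p * pi_frac m q))"
proof -
  have "c * tan u / (cos u)^2 = tan u * c + (tan u)^3 * c" if "cos u \<noteq> 0" for c u :: real
    using inverse_cos_squared_eq_one_plus_tan_squared[OF that]
    by (simp add: divide_inverse power3_eq_cube power2_eq_square algebra_simps flip: inverse_eq_divide)
  then show ?thesis
    using cos_ne_0(1) by (simp add: sum.distrib)
qed

lemma sum_cot_cot_div_cos_squared:
  "(\<Sum>n\<in>{0..<p * q}. cot (pi_frac n p) * cot (pi_frac n q) / (cos (pi_frac n (p * q)))^2)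
    = 2 / of_int p * ((of_int p)^2 - 1) * (of_int q - of_int e)"
proof -
  let ?SA = "\<lambda>m. cot (of_int p * pi_frac m q) * tan (of_int p * pi_frac m q) / (cos (pi_frac m q))^2"
  let ?SB = "\<lambda>m. cot (of_int p * pi_frac m q) * tan (pi_frac m q) / (cos (of_int p * pi_frac m q))^2"
  let ?SC = "\<lambda>m. cot (of_int p * pi_frac m q) * tan (pi_frac m q) / (cos (pi_frac m q))^2"
  have periodic: "residue_class_sum (pi_frac x q) = residue_class_sum (pi_frac (x mod q) q)" for x
    using pi_frac_eq_mod[OF nonzero(2), of x] by (simp add: residue_class_sum_add_int_pi)
  have "(\<Sum>n\<in>{0..<p * q}. cot (pi_frac n p) * cot (pi_frac n q) / (cos (pi_frac n (p * q)))^2)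
      = (\<Sum>b\<in>{0..<q}. residue_class_sum (pi_frac b q))"
    unfolding sum_mixed_radix[OF p_pos q_pos] sum_residue_class ..
  also have "\<dots> = (\<Sum>m\<in>{0..<q}. residue_class_sum (pi_frac (0 + p * m) q))"
    using sum_periodic_affine_reindex[where f = "\<lambda>x. residue_class_sum (pi_frac x q)" and c = 0,
        OF q_pos coprime periodic] by simp
  also have "\<dots> = of_int e * of_int p * sum ?SA {0..<q} + of_int e * (of_int p)^2 * sum ?SB {0..<q}
      - 2 * of_int e * sum ?SC {0..<q}"
    by (simp only: add_0_left of_int_mult_pi_frac[symmetric] residue_class_sum_p_mult
        sum.distrib sum_subtractf flip: sum_distrib_left)
  also have "\<dots> = 2 / of_int p * ((of_int p)^2 - 1) * (of_int q - of_int e)"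
  proof -
    have "real_of_int e = 1 \<or> real_of_int e = -1" and "real_of_int p \<noteq> 0"
      using e_cases nonzero by auto
    then show ?thesis
      unfolding sum_cot_mult_tan_p_mult_div_cos_squared sum_cot_p_mult_mult_tan_div_cos_p_mult_squared
        sum_cot_p_mult_mult_tan_div_cos_squared sum_tan_mult_cot_p_mult sum_tan_mult_tan_p_mult
        sum_tan_cubed_mult_cot_p_mult
      by (elim conjE disjE) (simp_all add: field_simps power2_eq_square)
  qed
  finally show ?thesis .
qed

end

theorem mainTheorem14:
  fixes p q :: int
  assumes "p \<ge> 3" and "q \<ge> 3" and "odd p" and "odd q" and "coprime p q"
    and "[q = 1] (mod p) \<or> [q = -1] (mod p)"
  defines "S \<equiv> (\<Sum>n\<in>{n\<in>{1..p*q-1}. \<not> p dvd n \<and> \<not> q dvd n}.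
      cot (pi * of_int n / of_int p) * cot (pi * of_int n / of_int q)
        / (cos (pi * of_int n / of_int (p*q)))\<^sup>2)"
  shows "([q = 1] (mod p) \<longrightarrow> S = 2 / of_int p * (of_int p ^ 2 - 1) * (of_int q - 1))
     \<and> ([q = -1] (mod p) \<longrightarrow> S = 2 / of_int p * (of_int p ^ 2 - 1) * (of_int q + 1))"
proof -
  have S_eq: "S = (\<Sum>n\<in>{0..<p * q}. cot (pi_frac n p) * cot (pi_frac n q) / (cos (pi_frac n (p * q)))^2)"
    unfolding S_def by (rule sum_nondivisors_eq_sum_atLeastLessThan) (auto simp: cot_pi_frac_eq_0)
  have closed_form: "S = 2 / of_int p * ((of_int p)^2 - 1) * (of_int q - of_int e)"
    if cong: "[q = e] (mod p)" and e: "e = 1 \<or> e = -1" for e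
  proof -
    obtain t where "e = q + p * t"
      using cong by (auto simp: cong_iff_lin)
    then have "q = (- t) * p + e"
      by simp
    then interpret near_multiple_pair p q "- t" e
      using assms e by unfold_locales auto
    show ?thesis
      unfolding S_eq by (rule sum_cot_cot_div_cos_squared)
  qed
  show ?thesis
    using closed_form[of 1] closed_form[of "-1"] by auto
qed

end
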